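(* Let $\Omega\subset\mathbb{Z}_2^n\setminus\{\mathbf 0\}$ be nonempty and such that every $\beta\in\Omega$ has even Hamming weight. Then the transition matrix $H_\Omega(t)$ of $\mathrm{NEPS}(P_3,\ldots,P_3;\Omega)$ satisfies $H_\Omega(\pi)=I$; in particular the graph is periodic at $\pi$.
   Context: $P_3$ is the path on three vertices. For graphs $G_1,\dots,G_n$ and $\Omega\subset\mathbb{Z}_2^n\setminus\{\mathbf 0\}$, $\mathrm{NEPS}(G_1,\dots,G_n;\Omega)$ is the graph on $V(G_1)\times\cdots\times V(G_n)$ with adjacency matrix $\sum_{\beta\in\Omega}A_1^{\beta_1}\otimes\cdots\otimes A_n^{\beta_n}$, $A_i$ the adjacency matrix of $G_i$. The Hamming weight of $\beta$ is its number of entries equal to $1$. The transition matrix of a graph with adjacency matrix $A$ is $H(t)=\exp(-itA)$; a graph is periodic at $\tau\ne0$ if $H(\tau)=\gamma I$ with $|\gamma|=1$. *)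

theory Defs
  imports Complex_Main "HOL-Library.Numeral_Type"
begin

definition mat_mult :: "('v::finite \<Rightarrow> 'v \<Rightarrow> complex) \<Rightarrow> ('v \<Rightarrow> 'v \<Rightarrow> complex) \<Rightarrow> 'v \<Rightarrow> 'v \<Rightarrow> complex" where
  "mat_mult M N = (\<lambda>u w. \<Sum>v\<in>UNIV. M u v * N v w)"

definition mat_id :: "'v \<Rightarrow> 'v \<Rightarrow> complex" where
  "mat_id = (\<lambda>u v. if u = v then 1 else 0)"

fun mat_pow :: "('v::finite \<Rightarrow> 'v \<Rightarrow> complex) \<Rightarrow> nat \<Rightarrow> 'v \<Rightarrow> 'v \<Rightarrow> complex" where
  "mat_pow M 0 = mat_id"
| "mat_pow M (Suc k) = mat_mult M (mat_pow M k)"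

definition mat_exp :: "('v::finite \<Rightarrow> 'v \<Rightarrow> complex) \<Rightarrow> 'v \<Rightarrow> 'v \<Rightarrow> complex" where
  "mat_exp M = (\<lambda>u v. \<Sum>k. mat_pow M k u v / of_nat (fact k))"

definition transition :: "('v::finite \<Rightarrow> 'v \<Rightarrow> complex) \<Rightarrow> real \<Rightarrow> 'v \<Rightarrow> 'v \<Rightarrow> complex" where
  "transition A t = mat_exp (\<lambda>u v. - \<i> * complex_of_real t * A u v)"

definition periodic_at :: "('v::finite \<Rightarrow> 'v \<Rightarrow> complex) \<Rightarrow> real \<Rightarrow> bool" where
  "periodic_at A \<tau> \<longleftrightarrow> \<tau> \<noteq> 0 \<and> (\<exists>\<gamma>. cmod \<gamma> = 1 \<and> transition A \<tau> = (\<lambda>u v. \<gamma> * mat_id u v))"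

definition P3_adj :: "3 \<Rightarrow> 3 \<Rightarrow> complex" where
  "P3_adj a b = (if (a = 0 \<and> b = 1) \<or> (a = 1 \<and> b = 0) \<or> (a = 1 \<and> b = 2) \<or> (a = 2 \<and> b = 1)
                 then 1 else 0)"

text \<open>NEPS adjacency matrix: factors indexed by the finite type 'n, the basis
  \<Omega> is a set of vectors in Z_2^n represented as 'n \<Rightarrow> bool.
  Entry (x,y) of A_1^{b_1} \<otimes> ... \<otimes> A_n^{b_n} is the product of the factor entries.\<close>
definition neps_adj :: "('n::finite \<Rightarrow> 'a \<Rightarrow> 'a \<Rightarrow> complex) \<Rightarrow> ('n \<Rightarrow> bool) set
    \<Rightarrow> ('n \<Rightarrow> 'a) \<Rightarrow> ('n \<Rightarrow> 'a) \<Rightarrow> complex" where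
  "neps_adj A \<Omega> x y = (\<Sum>\<beta>\<in>\<Omega>. \<Prod>i\<in>UNIV. (if \<beta> i then A i (x i) (y i) else (if x i = y i then 1 else 0)))"

definition hamming_weight :: "('n::finite \<Rightarrow> bool) \<Rightarrow> nat" where
  "hamming_weight \<beta> = card {i. \<beta> i}"

end

theory Submission
  imports Defs "HOL-Analysis.Complex_Transcendental" "HOL-Analysis.Cartesian_Space"
begin

text \<open>\<open>P\<^sub>3\<close> has an orthonormal eigenbasis with eigenvalues \<open>0\<close>, \<open>\<surd>2\<close>, \<open>-\<surd>2\<close>. The tensor
  products of these eigenvectors form an orthonormal eigenbasis of the NEPS; the eigenvector
  indexed by \<open>s = (s\<^sub>1, \<dots>, s\<^sub>n)\<close> has eigenvalue \<open>\<mu> = \<Sum>\<beta>\<in>\<Omega>. \<Prod>i. \<lambda>(s\<^sub>i)\<^sup>\<beta>\<^sup>i\<close>.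
  A product of an even, positive number of factors from \<open>{0, \<surd>2, -\<surd>2}\<close> is an even
  integer, so \<open>exp(-i\<pi>\<mu>) = 1\<close> for every eigenvalue and the spectral decomposition of \<open>H(\<pi>)\<close>
  collapses to the identity.\<close>

text \<open>\<open>complete\<close> says that the family \<open>F\<close> is the dual basis of the eigenvectors \<open>E\<close>, so that
  \<open>M = \<Sum>\<^sub>w \<mu> w \<cdot> E w F w\<^sup>T\<close>.\<close>
lemma mat_pow_eigenbasis:
  fixes M :: "'v::finite \<Rightarrow> 'v \<Rightarrow> complex" and E F :: "'w::finite \<Rightarrow> 'v \<Rightarrow> complex"
  assumes eigen: "\<And>w u. (\<Sum>x\<in>UNIV. M u x * E w x) = \<mu> w * E w u"
    and complete: "\<And>u v. (\<Sum>w\<in>UNIV. E w u * F w v) = mat_id u v"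
  shows "mat_pow M k u v = (\<Sum>w\<in>UNIV. \<mu> w ^ k * E w u * F w v)"
proof (induction k arbitrary: u)
  case 0
  then show ?case using complete by simp
next
  case (Suc k)
  have "mat_pow M (Suc k) u v = (\<Sum>x\<in>UNIV. \<Sum>w\<in>UNIV. M u x * E w x * (\<mu> w ^ k * F w v))"
    by (simp add: mat_mult_def Suc sum_distrib_left mult_ac)
  also have "\<dots> = (\<Sum>w\<in>UNIV. (\<Sum>x\<in>UNIV. M u x * E w x) * (\<mu> w ^ k * F w v))"
    by (subst sum.swap) (simp add: sum_distrib_right)
  also have "\<dots> = (\<Sum>w\<in>UNIV. \<mu> w ^ Suc k * E w u * F w v)"
    by (simp only: eigen) (simp add: mult_ac)
  finally show ?case .
qed

lemma mat_exp_eigenbasis: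
  fixes M :: "'v::finite \<Rightarrow> 'v \<Rightarrow> complex" and E F :: "'w::finite \<Rightarrow> 'v \<Rightarrow> complex"
  assumes eigen: "\<And>w u. (\<Sum>x\<in>UNIV. M u x * E w x) = \<mu> w * E w u"
    and complete: "\<And>u v. (\<Sum>w\<in>UNIV. E w u * F w v) = mat_id u v"
  shows "mat_exp M u v = (\<Sum>w\<in>UNIV. exp (\<mu> w) * E w u * F w v)"
proof -
  have "(\<lambda>k. mat_pow M k u v / of_nat (fact k))
      = (\<lambda>k. \<Sum>w\<in>UNIV. (\<mu> w ^ k /\<^sub>R fact k) * (E w u * F w v))"
    by (simp add: mat_pow_eigenbasis[OF eigen complete] sum_divide_distrib
        scaleR_conv_of_real divide_inverse sum_distrib_left mult_ac)
  moreover have "(\<lambda>k. \<Sum>w\<in>UNIV. (\<mu> w ^ k /\<^sub>R fact k) * (E w u * F w v))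
      sums (\<Sum>w\<in>UNIV. exp (\<mu> w) * (E w u * F w v))"
    by (intro sums_sum sums_mult2 exp_converges)
  ultimately show ?thesis
    unfolding mat_exp_def by (simp add: sums_iff mult.assoc)
qed

lemma transition_eigenbasis:
  fixes A :: "'v::finite \<Rightarrow> 'v \<Rightarrow> complex" and E F :: "'w::finite \<Rightarrow> 'v \<Rightarrow> complex"
  assumes eigen: "\<And>w u. (\<Sum>x\<in>UNIV. A u x * E w x) = \<mu> w * E w u"
    and complete: "\<And>u v. (\<Sum>w\<in>UNIV. E w u * F w v) = mat_id u v"
  shows "transition A t u v = (\<Sum>w\<in>UNIV. exp (- \<i> * of_real t * \<mu> w) * E w u * F w v)"
proof -
  have "(\<Sum>x\<in>UNIV. - \<i> * of_real t * A u x * E w x) = (- \<i> * of_real t * \<mu> w) * E w u" for w u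
    by (simp add: eigen sum_negf mult.assoc flip: sum_distrib_left)
  then show ?thesis
    unfolding transition_def by (rule mat_exp_eigenbasis[OF _ complete])
qed

definition tensor_vec :: "('n::finite \<Rightarrow> 'w \<Rightarrow> 'a \<Rightarrow> complex) \<Rightarrow> ('n \<Rightarrow> 'w) \<Rightarrow> ('n \<Rightarrow> 'a) \<Rightarrow> complex"
  where "tensor_vec E w x = (\<Prod>i\<in>UNIV. E i (w i) (x i))"

definition neps_eigenvalue :: "('n::finite \<Rightarrow> 'w \<Rightarrow> complex) \<Rightarrow> ('n \<Rightarrow> bool) set \<Rightarrow> ('n \<Rightarrow> 'w) \<Rightarrow> complex"
  where "neps_eigenvalue \<theta> \<Omega> w = (\<Sum>\<beta>\<in>\<Omega>. \<Prod>i\<in>UNIV. if \<beta> i then \<theta> i (w i) else 1)"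

lemma sum_fun_prod:
  fixes f :: "'n::finite \<Rightarrow> 'a::finite \<Rightarrow> complex"
  shows "(\<Sum>g\<in>UNIV. \<Prod>i\<in>UNIV. f i (g i)) = (\<Prod>i\<in>UNIV. \<Sum>a\<in>UNIV. f i a)"
  using prod_sum_PiE[of UNIV "\<lambda>_. UNIV" f] by simp

lemma tensor_vec_complete:
  fixes E F :: "'n::finite \<Rightarrow> 'w::finite \<Rightarrow> 'a \<Rightarrow> complex"
  assumes complete: "\<And>i a b. (\<Sum>s\<in>UNIV. E i s a * F i s b) = mat_id a b"
  shows "(\<Sum>w\<in>UNIV. tensor_vec E w u * tensor_vec F w v) = mat_id u v"
proof -
  have "(\<Sum>w\<in>UNIV. tensor_vec E w u * tensor_vec F w v)
      = (\<Prod>i\<in>UNIV. \<Sum>s\<in>UNIV. E i s (u i) * F i s (v i))"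
    using sum_fun_prod[of "\<lambda>i s. E i s (u i) * F i s (v i)"]
    by (simp add: tensor_vec_def prod.distrib[symmetric])
  also have "\<dots> = (\<Prod>i\<in>UNIV. mat_id (u i) (v i))"
    by (simp add: complete)
  also have "\<dots> = mat_id u v"
    by (auto simp: mat_id_def prod_zero)
  finally show ?thesis .
qed

lemma neps_adj_tensor_vec_eigen:
  fixes A :: "'n::finite \<Rightarrow> 'a::finite \<Rightarrow> 'a \<Rightarrow> complex" and E :: "'n \<Rightarrow> 'w \<Rightarrow> 'a \<Rightarrow> complex"
  assumes eigen: "\<And>i s a. (\<Sum>b\<in>UNIV. A i a b * E i s b) = \<theta> i s * E i s a"
  shows "(\<Sum>y\<in>UNIV. neps_adj A \<Omega> x y * tensor_vec E w y) = neps_eigenvalue \<theta> \<Omega> w * tensor_vec E w x"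
proof -
  have factor: "(\<Sum>b\<in>UNIV. (if \<beta> i then A i (x i) b else if x i = b then 1 else 0) * E i (w i) b)
      = (if \<beta> i then \<theta> i (w i) else 1) * E i (w i) (x i)" for \<beta> i
    by (cases "\<beta> i") (simp_all add: eigen if_distrib[of "\<lambda>z. z * _"] cong: if_cong)
  have "(\<Sum>y\<in>UNIV. neps_adj A \<Omega> x y * tensor_vec E w y)
      = (\<Sum>\<beta>\<in>\<Omega>. \<Sum>y\<in>UNIV. \<Prod>i\<in>UNIV.
           (if \<beta> i then A i (x i) (y i) else if x i = y i then 1 else 0) * E i (w i) (y i))"
    by (simp add: neps_adj_def tensor_vec_def sum_distrib_right prod.distrib) (rule sum.swap)
  also have "\<dots> = (\<Sum>\<beta>\<in>\<Omega>. \<Prod>i\<in>UNIV. (if \<beta> i then \<theta> i (w i) else 1) * E i (w i) (x i))"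
    using sum_fun_prod[of "\<lambda>i b. (if \<beta> i then A i (x i) b else if x i = b then 1 else 0) * E i (w i) b" for \<beta>]
    by (simp add: factor)
  also have "\<dots> = neps_eigenvalue \<theta> \<Omega> w * tensor_vec E w x"
    by (simp add: neps_eigenvalue_def tensor_vec_def prod.distrib sum_distrib_right)
  finally show ?thesis .
qed

lemma UNIV_3_eq: "(UNIV :: 3 set) = {0, 1, 2}"
proof -
  have "(3::3) = 0" by simp
  then show ?thesis using UNIV_3 by auto
qed

lemma sum_UNIV_3: "(\<Sum>a\<in>UNIV. f a) = f 0 + f 1 + (f (2::3) :: 'a::comm_monoid_add)"
  unfolding UNIV_3_eq by (simp add: add.assoc)

lemma exhaust_3_zero: "(a::3) = 0 \<or> a = 1 \<or> a = 2"
proof -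
  have "a \<in> {0, 1, 2}" unfolding UNIV_3_eq[symmetric] by (rule UNIV_I)
  then show ?thesis by simp
qed

definition P3_sign :: "3 \<Rightarrow> int"
  where "P3_sign s = (if s = 0 then 0 else if s = 1 then 1 else -1)"

definition P3_eigvec :: "3 \<Rightarrow> 3 \<Rightarrow> complex"
  where "P3_eigvec s a =
    (if s = 0 then (if a = 0 then sqrt 2 / 2 else if a = 1 then 0 else - sqrt 2 / 2)
     else if a = 1 then of_int (P3_sign s) * sqrt 2 / 2 else 1 / 2)"

definition P3_eigval :: "3 \<Rightarrow> complex"
  where "P3_eigval s = of_int (P3_sign s) * complex_of_real (sqrt 2)"

lemma of_real_sqrt_2_squared: "complex_of_real (sqrt 2) ^ 2 = 2"
  by (simp flip: of_real_power)

lemma P3_adj_values: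
  "P3_adj 0 0 = 0" "P3_adj 0 1 = 1" "P3_adj 0 2 = 0"
  "P3_adj 1 0 = 1" "P3_adj 1 1 = 0" "P3_adj 1 2 = 1"
  "P3_adj 2 0 = 0" "P3_adj 2 1 = 1" "P3_adj 2 2 = 0"
  by (simp_all add: P3_adj_def)

lemma P3_eigvec_values:
  "P3_eigvec 0 0 = sqrt 2 / 2" "P3_eigvec 0 1 = 0" "P3_eigvec 0 2 = - sqrt 2 / 2"
  "P3_eigvec 1 0 = 1 / 2" "P3_eigvec 1 1 = sqrt 2 / 2" "P3_eigvec 1 2 = 1 / 2"
  "P3_eigvec 2 0 = 1 / 2" "P3_eigvec 2 1 = - sqrt 2 / 2" "P3_eigvec 2 2 = 1 / 2"
  by (simp_all add: P3_eigvec_def P3_sign_def)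

lemma P3_eigvec_eigen: "(\<Sum>b\<in>UNIV. P3_adj a b * P3_eigvec s b) = P3_eigval s * P3_eigvec s a"
  using exhaust_3_zero[of a] exhaust_3_zero[of s]
  by (elim disjE) (simp_all add: sum_UNIV_3 P3_adj_values P3_eigvec_values P3_eigval_def
      P3_sign_def power2_eq_square[symmetric] of_real_sqrt_2_squared field_simps)

lemma P3_eigvec_complete: "(\<Sum>s\<in>UNIV. P3_eigvec s a * P3_eigvec s b) = mat_id a b"
  using exhaust_3_zero[of a] exhaust_3_zero[of b]
  by (elim disjE) (simp_all add: sum_UNIV_3 mat_id_def P3_eigvec_values
      power2_eq_square[symmetric] of_real_sqrt_2_squared field_simps)

lemma prod_times_sqrt_2_even_card:
  assumes "finite S" "S \<noteq> {}" "even (card S)"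
  shows "(\<Prod>i\<in>S. of_int (c i) * complex_of_real (sqrt 2)) / 2 \<in> \<int>"
proof -
  obtain k where k: "card S = 2 * Suc k"
    using assms by (metis card_0_eq evenE gr0_implies_Suc less_nat_zero_code mult_0_right neq0_conv)
  have "complex_of_real (sqrt 2) ^ card S = 2 * 2 ^ k"
    unfolding k power_mult of_real_sqrt_2_squared by simp
  then have "(\<Prod>i\<in>S. of_int (c i) * complex_of_real (sqrt 2)) / 2 = of_int (prod c S * 2 ^ k)"
    by (simp add: prod.distrib)
  then show ?thesis by (simp only: Ints_of_int)
qed

lemma P3_neps_eigenvalue_even:
  fixes \<Omega> :: "('n::finite \<Rightarrow> bool) set"
  assumes "\<forall>\<beta>\<in>\<Omega>. \<beta> \<noteq> (\<lambda>_. False)" and "\<forall>\<beta>\<in>\<Omega>. even (hamming_weight \<beta>)"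
  shows "neps_eigenvalue (\<lambda>_. P3_eigval) \<Omega> w / 2 \<in> \<int>"
proof -
  have "(\<Prod>i\<in>UNIV. if \<beta> i then of_int (P3_sign (w i)) * complex_of_real (sqrt 2) else 1) / 2 \<in> \<int>"
    if "\<beta> \<in> \<Omega>" for \<beta>
  proof -
    have "{i. \<beta> i} \<noteq> {}" "even (card {i. \<beta> i})"
      using assms that by (auto simp: hamming_weight_def fun_eq_iff)
    then show ?thesis
      using prod_times_sqrt_2_even_card[of "{i. \<beta> i}" "\<lambda>i. P3_sign (w i)"]
      by (simp add: prod.If_cases Collect_conj_eq[symmetric])
  qed
  then show ?thesis
    unfolding neps_eigenvalue_def P3_eigval_def sum_divide_distrib by blast
qed

lemma exp_pi_even_int:
  assumes "z / 2 \<in> \<int>"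
  shows "exp (- \<i> * pi * z) = 1"
proof -
  obtain m where "z / 2 = of_int m"
    using assms by (elim Ints_cases)
  then have "- \<i> * pi * z = \<i> * (of_int (- m) * (of_real pi * 2))"
    by (simp add: field_simps)
  then show ?thesis by (simp only: exp_2pi_1_int)
qed

theorem corollary3p5:
  fixes \<Omega> :: "('n::finite \<Rightarrow> bool) set"
  assumes "\<Omega> \<noteq> {}"
    and "\<forall>\<beta>\<in>\<Omega>. \<beta> \<noteq> (\<lambda>_. False)"
    and "\<forall>\<beta>\<in>\<Omega>. even (hamming_weight \<beta>)"
  shows "transition (neps_adj (\<lambda>_. P3_adj) \<Omega>) pi = mat_id
         \<and> periodic_at (neps_adj (\<lambda>_. P3_adj) \<Omega>) pi"
proof -
  let ?A = "neps_adj (\<lambda>_. P3_adj) \<Omega>"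
  let ?\<mu> = "neps_eigenvalue (\<lambda>_. P3_eigval) \<Omega>"
  let ?E = "tensor_vec (\<lambda>_. P3_eigvec)"
  have complete: "(\<Sum>w\<in>UNIV. ?E w u * ?E w v) = mat_id u v" for u v
    by (rule tensor_vec_complete) (rule P3_eigvec_complete)
  have eigen: "(\<Sum>y\<in>UNIV. ?A x y * ?E w y) = ?\<mu> w * ?E w x" for w x
    by (rule neps_adj_tensor_vec_eigen) (rule P3_eigvec_eigen)
  have "exp (- \<i> * pi * ?\<mu> w) = 1" for w
    by (rule exp_pi_even_int) (rule P3_neps_eigenvalue_even[OF assms(2,3)])
  then have id: "transition ?A pi = mat_id"
    by (simp add: transition_eigenbasis[OF eigen complete] complete fun_eq_iff)
  then have "periodic_at ?A pi"
    unfolding periodic_at_def by (intro conjI exI[of _ 1]) auto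
  with id show ?thesis by blast
qed

end
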